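(* Let $\mathbb{M}$ be a flow monoid with idempotent addition, and let $h_1,h_2$ be flow graphs with the same node set $X$ whose edge functions are continuous and distributive. Then $\mathsf{tf}(h_1)=\mathsf{tf}(h_2)$ if and only if path replacement of $h_1$ by $h_2$ and path replacement of $h_2$ by $h_1$ both hold.
   Context: A flow monoid is a commutative monoid $(\mathbb{M},+,0)$ such that $n\le m :\iff \exists o.\ m=n+o$ is a partial order in which every ascending chain $K$ has a least upper bound $\bigsqcup K$, and $n+\bigsqcup K=\bigsqcup(n+K)$. Addition is idempotent if $m+m=m$. A function is continuous if it commutes with least upper bounds of ascending chains, and distributive if $f(m+n)=f(m)+f(n)$ and $f(0)=0$. Infinite sums denote least upper bounds of finite partial sums; sums and $\le$ on functions are pointwise. A flow graph is $h=(X,E,\mathit{in})$ with $X\subseteq\mathbb{N}$ finite, $E:X\times\mathbb{N}\to$ continuous functions $\mathbb{M}\to\mathbb{M}$, $\mathit{in}:(\mathbb{N}\setminus X)\times X\to\mathbb{M}$; $\mathit{in}_x=\sum_{y\notin X}\mathit{in}(y,x)$; the flow is the least $\mathit{flow}:X\to\mathbb{M}$ with $\mathit{flow}(x)=\mathit{in}_x+\sum_{y\in X}E(y,x)(\mathit{flow}(y))$; outflow $\mathit{out}(x,y)=E(x,y)(\mathit{flow}(x))$. The transfer function $\mathsf{tf}(h)$ maps each inflow $\mathit{in}'$ to the outflow of $(X,E,\mathit{in}')$; $\mathsf{tf}(h_1)=\mathsf{tf}(h_2)$ means equality for all inflows. A path through $h$ is $p=x_0\cdots x_nz$ with $x_i\in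 X$, $z\in\mathbb{N}\setminus X$; $\mathrm{Paths}_h(x\to(y,z))$ is the set of such paths with $x_0=x$, $x_n=y$, final element $z$; $E_p=E(x_n,z)\circ\cdots\circ E(x_0,x_1)$; $E_P=\sum_{q\in P}E_q$. $\mathrm{Out}(h_1,h_2)=\{x\in X\mid\exists z.\ h_1.E(x,z)\neq h_2.E(x,z)\}$. Path replacement of $h_1$ by $h_2$: for every $x\in\mathrm{Out}(h_1,h_2)$, $y\in X$, $z\in\mathbb{N}\setminus X$ and every $p\in\mathrm{Paths}_{h_1}(x\to(y,z))$ there is $P\subseteq\mathrm{Paths}_{h_2}(x\to(y,z))$ with $E_p\le E_P$. *)

theory Defs
  imports Main
begin

definition is_lub :: "'a::order set \<Rightarrow> 'a \<Rightarrow> bool" where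
  "is_lub K u \<longleftrightarrow> (\<forall>k\<in>K. k \<le> u) \<and> (\<forall>v. (\<forall>k\<in>K. k \<le> v) \<longrightarrow> u \<le> v)"

definition flub :: "'a::order set \<Rightarrow> 'a" where
  "flub K = (THE u. is_lub K u)"

text \<open>Ascending chains are monotone sequences.\<close>

definition flow_monoid :: "'a::canonically_ordered_monoid_add itself \<Rightarrow> bool" where
  "flow_monoid _ \<longleftrightarrow>
     (\<forall>c :: nat \<Rightarrow> 'a. mono c \<longrightarrow> (\<exists>u. is_lub (range c) u)) \<and>
     (\<forall>(c :: nat \<Rightarrow> 'a) n. mono c \<longrightarrow> n + flub (range c) = flub (range (\<lambda>i. n + c i)))"

definition fm_continuous :: "('a::canonically_ordered_monoid_add \<Rightarrow> 'a) \<Rightarrow> bool" where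
  "fm_continuous f \<longleftrightarrow> (\<forall>c :: nat \<Rightarrow> 'a. mono c \<longrightarrow> f (flub (range c)) = flub (range (\<lambda>i. f (c i))))"

definition fm_distributive :: "('a::canonically_ordered_monoid_add \<Rightarrow> 'a) \<Rightarrow> bool" where
  "fm_distributive f \<longleftrightarrow> (\<forall>m n. f (m + n) = f m + f n) \<and> f 0 = 0"

definition isum :: "('b \<Rightarrow> 'a::canonically_ordered_monoid_add) \<Rightarrow> 'b set \<Rightarrow> 'a" where
  "isum f A = flub {sum f F | F. finite F \<and> F \<subseteq> A}"

record 'a flow_graph =
  nodes :: "nat set"
  edge :: "nat \<Rightarrow> nat \<Rightarrow> 'a \<Rightarrow> 'a"
  inflow :: "nat \<Rightarrow> nat \<Rightarrow> 'a"

definition is_flow_graph :: "'a::canonically_ordered_monoid_add flow_graph \<Rightarrow> bool" where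
  "is_flow_graph h \<longleftrightarrow> finite (nodes h) \<and> (\<forall>x\<in>nodes h. \<forall>z. fm_continuous (edge h x z))"

definition inflow_at :: "'a::canonically_ordered_monoid_add flow_graph \<Rightarrow> nat \<Rightarrow> 'a" where
  "inflow_at h x = isum (\<lambda>y. inflow h y x) (- nodes h)"

definition flow_eq :: "'a::canonically_ordered_monoid_add flow_graph \<Rightarrow> (nat \<Rightarrow> 'a) \<Rightarrow> bool" where
  "flow_eq h f \<longleftrightarrow>
     (\<forall>x\<in>nodes h. f x = inflow_at h x + (\<Sum>y\<in>nodes h. edge h y x (f y))) \<and>
     (\<forall>x. x \<notin> nodes h \<longrightarrow> f x = 0)"

definition flow :: "'a::canonically_ordered_monoid_add flow_graph \<Rightarrow> nat \<Rightarrow> 'a" where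
  "flow h = (THE f. flow_eq h f \<and> (\<forall>g. flow_eq h g \<longrightarrow> (\<forall>x\<in>nodes h. f x \<le> g x)))"

definition outflow :: "'a::canonically_ordered_monoid_add flow_graph \<Rightarrow> nat \<Rightarrow> nat \<Rightarrow> 'a" where
  "outflow h x z = (if x \<in> nodes h \<and> z \<notin> nodes h then edge h x z (flow h x) else 0)"

definition tf :: "'a::canonically_ordered_monoid_add flow_graph \<Rightarrow> (nat \<Rightarrow> nat \<Rightarrow> 'a) \<Rightarrow> nat \<Rightarrow> nat \<Rightarrow> 'a" where
  "tf h = (\<lambda>inn. outflow (h\<lparr>inflow := inn\<rparr>))"

text \<open>A path x0 ... xn z is represented as the pair ([x0,...,xn], z).\<close>
definition paths :: "'a flow_graph \<Rightarrow> nat \<Rightarrow> nat \<Rightarrow> nat \<Rightarrow> (nat list \<times> nat) set" where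
  "paths h x y z = {(xs, z) | xs. xs \<noteq> [] \<and> set xs \<subseteq> nodes h \<and> hd xs = x \<and> last xs = y \<and> z \<notin> nodes h}"

fun ecomp :: "(nat \<Rightarrow> nat \<Rightarrow> 'a \<Rightarrow> 'a) \<Rightarrow> nat list \<Rightarrow> nat \<Rightarrow> 'a \<Rightarrow> 'a" where
  "ecomp E [] z = id"
| "ecomp E [x] z = E x z"
| "ecomp E (x # y # ys) z = ecomp E (y # ys) z \<circ> E x y"

definition epath :: "'a flow_graph \<Rightarrow> nat list \<times> nat \<Rightarrow> 'a \<Rightarrow> 'a" where
  "epath h p = ecomp (edge h) (fst p) (snd p)"

definition epaths :: "'a::canonically_ordered_monoid_add flow_graph \<Rightarrow> (nat list \<times> nat) set \<Rightarrow> 'a \<Rightarrow> 'a" where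
  "epaths h P = (\<lambda>m. isum (\<lambda>q. epath h q m) P)"

definition Out :: "'a flow_graph \<Rightarrow> 'a flow_graph \<Rightarrow> nat set" where
  "Out h1 h2 = {x \<in> nodes h1. \<exists>z. edge h1 x z \<noteq> edge h2 x z}"

definition path_replacement :: "'a::canonically_ordered_monoid_add flow_graph \<Rightarrow> 'a flow_graph \<Rightarrow> bool" where
  "path_replacement h1 h2 \<longleftrightarrow>
     (\<forall>x\<in>Out h1 h2. \<forall>y\<in>nodes h1. \<forall>z. z \<notin> nodes h1 \<longrightarrow>
        (\<forall>p\<in>paths h1 x y z. \<exists>P. P \<subseteq> paths h2 x y z \<and>
            (\<forall>m. epath h1 p m \<le> epaths h2 P m)))"

end

theory Submission
  imports Defs "HOL-Library.Countable"
begin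

text \<open>With idempotent addition the canonical order is a join semilattice with \<open>+\<close> as join,
  and the flow is the least upper bound of its Kleene iterates. Every iterate is built from
  inflows by distributive edge functions, sums and chain limits, so the flow at a node is
  bounded by anything that bounds what the inflows contribute along walks; in particular
  the outflow at \<open>(y, z)\<close> is the join, over all nodes \<open>x\<close> and paths from \<open>x\<close> to \<open>(y, z)\<close>, of
  the path functions applied to the inflow at \<open>x\<close>.

  If \<open>h\<^sub>1\<close> and \<open>h\<^sub>2\<close> have the same transfer function, feed a single value \<open>m\<close> into a node
  \<open>x\<close>: a path of \<open>h\<^sub>1\<close> from \<open>x\<close> contributes at most the common outflow, which is bounded by
  the sum over all paths of \<open>h\<^sub>2\<close> from \<open>x\<close>. Conversely, under path replacement, pushing a
  value bounded by the flow of \<open>h\<^sub>2\<close> along a walk of \<open>h\<^sub>1\<close> never exceeds the outflow of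
  \<open>h\<^sub>2\<close>: edges leaving nodes outside \<open>Out\<close> agree in both graphs, and at the first node in
  \<open>Out\<close> the rest of the walk is replaced by paths of \<open>h\<^sub>2\<close>.\<close>

lemma fm_distributive_mono:
  "fm_distributive f \<Longrightarrow> (a::'a::canonically_ordered_monoid_add) \<le> b \<Longrightarrow> f a \<le> f b"
  unfolding fm_distributive_def by (auto simp: le_iff_add)

lemma fm_distributiveD:
  assumes "fm_distributive f"
  shows "f 0 = 0" and "f (a + b) = f a + f b"
  using assms unfolding fm_distributive_def by auto

lemma mono_fm_distributive_comp:
  "fm_distributive f \<Longrightarrow> mono c \<Longrightarrow> mono (\<lambda>i. f (c i))"
  by (simp add: mono_def fm_distributive_mono)

lemma fm_continuous_comp:
  assumes "fm_continuous f" and "fm_continuous g" and "fm_distributive g"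
  shows "fm_continuous (f \<circ> g)"
  unfolding fm_continuous_def
proof (intro allI impI)
  fix c :: "nat \<Rightarrow> 'a" assume "mono c"
  have "f (g (flub (range c))) = f (flub (range (\<lambda>i. g (c i))))"
    using \<open>mono c\<close> \<open>fm_continuous g\<close> unfolding fm_continuous_def by simp
  also have "\<dots> = flub (range (\<lambda>i. f (g (c i))))"
    using mono_fm_distributive_comp[OF \<open>fm_distributive g\<close> \<open>mono c\<close>] \<open>fm_continuous f\<close>
    unfolding fm_continuous_def by blast
  finally show "(f \<circ> g) (flub (range c)) = flub (range (\<lambda>i. (f \<circ> g) (c i)))"
    by simp
qed

lemma fm_distributive_ecomp:
  "(\<forall>x\<in>set ys. \<forall>z. fm_distributive (E x z)) \<Longrightarrow> fm_distributive (ecomp E ys z)"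
  by (induction E ys z rule: ecomp.induct) (auto simp: fm_distributive_def)

lemma fm_continuous_ecomp:
  "(\<forall>x\<in>set ys. \<forall>z. fm_continuous (E x z) \<and> fm_distributive (E x z)) \<Longrightarrow>
    fm_continuous (ecomp E ys z)"
proof (induction E ys z rule: ecomp.induct)
  case (3 E x y ys z)
  then show ?case
    by (simp only: ecomp.simps) (rule fm_continuous_comp, auto)
qed (simp_all add: fm_continuous_def)

lemma is_lub_unique: "is_lub K u \<Longrightarrow> is_lub K v \<Longrightarrow> u = v"
  unfolding is_lub_def by (meson antisym)

lemma flub_eqI: "is_lub K u \<Longrightarrow> flub K = u"
  unfolding flub_def by (rule the_equality) (auto dest: is_lub_unique)

lemma flub_singleton: "flub {k} = k"
  by (rule flub_eqI) (simp add: is_lub_def)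

context
  assumes add_idem: "\<And>m::'a::canonically_ordered_monoid_add. m + m = m"
begin

lemma add_least: "a \<le> v \<Longrightarrow> b \<le> v \<Longrightarrow> a + b \<le> (v::'a)"
proof -
  assume "a \<le> v" "b \<le> v"
  then obtain c d where "v = a + c" "v = b + d" unfolding le_iff_add by blast
  then have "v = (a + b) + (c + d)" using add_idem[of v] by (metis add.assoc add.commute)
  then show ?thesis unfolding le_iff_add by blast
qed

lemma sum_least: "(\<And>i. i \<in> S \<Longrightarrow> f i \<le> v) \<Longrightarrow> sum f S \<le> (v::'a)"
  by (induction S rule: infinite_finite_induct) (auto intro: add_least)

end

context
  assumes flow_monoid: "flow_monoid TYPE('a::canonically_ordered_monoid_add)"
begin

lemma chain_is_lub: "mono (c::nat \<Rightarrow> 'a) \<Longrightarrow> is_lub (range c) (flub (range c))"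
  using flow_monoid unfolding flow_monoid_def by (metis flub_eqI)

lemma chain_upper: "mono (c::nat \<Rightarrow> 'a) \<Longrightarrow> c n \<le> flub (range c)"
  using chain_is_lub unfolding is_lub_def by blast

lemma chain_least: "mono (c::nat \<Rightarrow> 'a) \<Longrightarrow> (\<And>n. c n \<le> v) \<Longrightarrow> flub (range c) \<le> v"
  using chain_is_lub unfolding is_lub_def by blast

lemma add_flub: "mono (c::nat \<Rightarrow> 'a) \<Longrightarrow> n + flub (range c) = flub (range (\<lambda>i. n + c i))"
  using flow_monoid unfolding flow_monoid_def by blast

lemma flub_Suc_shift: "mono (c::nat \<Rightarrow> 'a) \<Longrightarrow> flub (range (\<lambda>n. c (Suc n))) = flub (range c)"
proof -
  assume mc: "mono c"
  then have ms: "mono (\<lambda>n. c (Suc n))" by (simp add: mono_def)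
  show ?thesis
  proof (rule antisym)
    show "flub (range (\<lambda>n. c (Suc n))) \<le> flub (range c)"
      using mc ms by (intro chain_least chain_upper)
    have "c n \<le> flub (range (\<lambda>n. c (Suc n)))" for n
      using monoD[OF mc, of n "Suc n"] chain_upper[OF ms, of n] by simp
    then show "flub (range c) \<le> flub (range (\<lambda>n. c (Suc n)))"
      using mc by (intro chain_least)
  qed
qed

lemma flub_add:
  assumes ma: "mono (a::nat \<Rightarrow> 'a)" and mb: "mono b"
  shows "flub (range (\<lambda>n. a n + b n)) = flub (range a) + flub (range b)"
proof (rule antisym)
  have mab: "mono (\<lambda>n. a n + b n)" using ma mb by (simp add: mono_def add_mono)
  show "flub (range (\<lambda>n. a n + b n)) \<le> flub (range a) + flub (range b)"
    using ma mb by (intro chain_least mab add_mono chain_upper)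
  have cross: "b i + a j \<le> flub (range (\<lambda>n. a n + b n))" for i j
  proof -
    have "b i + a j \<le> a (max i j) + b (max i j)"
      using ma mb by (metis add.commute add_mono max.cobounded1 max.cobounded2 monoD)
    then show ?thesis using chain_upper[OF mab, of "max i j"] by simp
  qed
  have mono_shift: "mono (\<lambda>j. u + c j)" if "mono c" for u and c :: "nat \<Rightarrow> 'a"
    using that by (simp add: mono_def add_left_mono)
  have "flub (range a) + b i \<le> flub (range (\<lambda>n. a n + b n))" for i
  proof -
    have "flub (range a) + b i = flub (range (\<lambda>j. b i + a j))"
      by (subst add.commute) (rule add_flub[OF ma])
    also have "\<dots> \<le> flub (range (\<lambda>n. a n + b n))"
      using cross by (intro chain_least mono_shift ma)
    finally show ?thesis .
  qed
  then show "flub (range a) + flub (range b) \<le> flub (range (\<lambda>n. a n + b n))"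
    unfolding add_flub[OF mb] by (intro chain_least mono_shift mb)
qed

lemma mono_sum_chains:
  "(\<And>y. y \<in> S \<Longrightarrow> mono (c y)) \<Longrightarrow> mono (\<lambda>n. \<Sum>y\<in>S. (c y (n::nat) :: 'a))"
  by (simp add: mono_def sum_mono)

lemma flub_sum:
  "finite S \<Longrightarrow> (\<And>y. y \<in> S \<Longrightarrow> mono (c y)) \<Longrightarrow>
    flub (range (\<lambda>n. \<Sum>y\<in>S. (c y (n::nat) :: 'a))) = (\<Sum>y\<in>S. flub (range (c y)))"
proof (induction S rule: finite_induct)
  case empty
  then show ?case by (simp add: flub_singleton)
next
  case (insert x F)
  then show ?case
    using flub_add[of "c x" "\<lambda>n. \<Sum>y\<in>F. c y n"] mono_sum_chains[of F c] by simp
qed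

text \<open>An infinite sum over a countable index set is the limit of the partial sums over the
  initial segments of an enumeration.\<close>

lemma isum_is_lub:
  "is_lub {sum g F | F. finite F \<and> F \<subseteq> (A::'b::countable set)} (isum g A :: 'a)"
proof -
  define c where "c n = sum g {a\<in>A. to_nat a < n}" for n
  have fin: "finite {a\<in>A. to_nat a < n}" for n
    by (rule finite_subset[of _ "to_nat -` {..<n}"]) (auto intro: finite_vimageI)
  have mc: "mono c" unfolding mono_def c_def by (auto intro!: sum_mono2 fin)
  define S where "S = {sum g F | F. finite F \<and> F \<subseteq> A}"
  have "is_lub S (flub (range c))"
    unfolding is_lub_def
  proof (intro conjI ballI allI impI)
    fix k assume "k \<in> S"
    then obtain F where F: "k = sum g F" "finite F" "F \<subseteq> A" unfolding S_def by auto
    define n where "n = Suc (Max (to_nat ` F))"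
    have "F \<subseteq> {a\<in>A. to_nat a < n}" using F by (auto simp: n_def le_imp_less_Suc)
    then have "sum g F \<le> c n" unfolding c_def by (intro sum_mono2 fin) auto
    then show "k \<le> flub (range c)" using F chain_upper[OF mc, of n] by simp
  next
    fix v assume "\<forall>k\<in>S. k \<le> v"
    moreover have "c n \<in> S" for n unfolding S_def c_def using fin by blast
    ultimately show "flub (range c) \<le> v" by (intro chain_least[OF mc]) auto
  qed
  moreover have "isum g A = flub (range c)" unfolding isum_def S_def[symmetric]
    by (rule flub_eqI) fact
  ultimately show ?thesis unfolding S_def by simp
qed

lemma isum_upper: "a \<in> A \<Longrightarrow> g a \<le> (isum g (A::'b::countable set) :: 'a)"
proof -
  assume "a \<in> A"
  then have "sum g {a} \<in> {sum g F | F. finite F \<and> F \<subseteq> A}" by blast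
  then show ?thesis using isum_is_lub[of g A] unfolding is_lub_def by simp
qed

lemma isum_least:
  assumes add_idem: "\<And>m::'a. m + m = m" and "\<And>a. a \<in> A \<Longrightarrow> g a \<le> v"
  shows "isum g (A::'b::countable set) \<le> (v::'a)"
  using isum_is_lub[of g A] assms unfolding is_lub_def by (blast intro: sum_least)

lemma isum_indicator:
  assumes add_idem: "\<And>m::'a. m + m = m" and "a \<in> A"
  shows "isum (\<lambda>b. if b = a then m else 0) (A::'b::countable set) = (m::'a)"
  using assms isum_upper[of a A "\<lambda>b. if b = a then m else 0"]
  by (intro antisym isum_least) auto

end

locale distributive_flow_graph =
  fixes h :: "'a::canonically_ordered_monoid_add flow_graph"
  assumes flow_monoid: "flow_monoid TYPE('a)"
    and flow_graph: "is_flow_graph h"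
    and edge_distributive: "\<forall>x\<in>nodes h. \<forall>z. fm_distributive (edge h x z)"
begin

lemma inflow_update_distributive: "distributive_flow_graph (h\<lparr>inflow := inn\<rparr>)"
  unfolding distributive_flow_graph_def
  using flow_monoid flow_graph edge_distributive by (simp add: is_flow_graph_def)

lemma finite_nodes: "finite (nodes h)"
  using flow_graph unfolding is_flow_graph_def by blast

lemma fm_distributive_walk: "set ys \<subseteq> nodes h \<Longrightarrow> fm_distributive (ecomp (edge h) ys z)"
  using edge_distributive by (intro fm_distributive_ecomp) blast

lemma fm_continuous_walk: "set ys \<subseteq> nodes h \<Longrightarrow> fm_continuous (ecomp (edge h) ys z)"
  using flow_graph edge_distributive unfolding is_flow_graph_def
  by (intro fm_continuous_ecomp) blast

lemma edge_mono: "x \<in> nodes h \<Longrightarrow> a \<le> b \<Longrightarrow> edge h x y a \<le> edge h x y b"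
  using edge_distributive by (blast intro: fm_distributive_mono)

lemma edge_continuous:
  assumes "x \<in> nodes h" and "mono (c :: nat \<Rightarrow> 'a)"
  shows "edge h x y (flub (range c)) = flub (range (\<lambda>i. edge h x y (c i)))"
proof -
  have "fm_continuous (edge h x y)" using flow_graph assms(1) unfolding is_flow_graph_def by blast
  with assms(2) show ?thesis unfolding fm_continuous_def by blast
qed

definition flow_step :: "(nat \<Rightarrow> 'a) \<Rightarrow> nat \<Rightarrow> 'a" where
  "flow_step g x = (if x \<in> nodes h then inflow_at h x + (\<Sum>y\<in>nodes h. edge h y x (g y)) else 0)"

definition flow_approx :: "nat \<Rightarrow> nat \<Rightarrow> 'a" where
  "flow_approx n = (flow_step ^^ n) (\<lambda>_. 0)"

definition flow_limit :: "nat \<Rightarrow> 'a" where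
  "flow_limit x = flub (range (\<lambda>n. flow_approx n x))"

lemma flow_approx_0: "flow_approx 0 = (\<lambda>_. 0)"
  by (simp add: flow_approx_def)

lemma flow_approx_Suc: "flow_approx (Suc n) = flow_step (flow_approx n)"
  by (simp add: flow_approx_def)

lemma flow_eq_iff_fixpoint: "flow_eq h g \<longleftrightarrow> flow_step g = g"
  unfolding flow_eq_def flow_step_def fun_eq_iff by (metis (no_types, lifting))

lemma flow_step_mono: "(\<And>y. g y \<le> g' y) \<Longrightarrow> flow_step g x \<le> flow_step g' x"
  unfolding flow_step_def by (auto intro!: add_left_mono sum_mono edge_mono)

lemma mono_flow_approx: "mono (\<lambda>n. flow_approx n x)"
proof -
  have "flow_approx n x \<le> flow_approx (Suc n) x" for n
    by (induction n arbitrary: x) (auto simp: flow_approx_0 flow_approx_Suc intro: flow_step_mono)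
  then show ?thesis by (simp add: mono_iff_le_Suc)
qed

lemma flow_limit_fixpoint: "flow_step flow_limit = flow_limit"
proof
  fix x
  show "flow_step flow_limit x = flow_limit x"
  proof (cases "x \<in> nodes h")
    case True
    have chains: "mono (\<lambda>n. edge h y x (flow_approx n y))" if "y \<in> nodes h" for y
      using that edge_distributive by (blast intro: mono_fm_distributive_comp[OF _ mono_flow_approx])
    have "flow_step flow_limit x = inflow_at h x + (\<Sum>y\<in>nodes h. edge h y x (flow_limit y))"
      using True by (simp add: flow_step_def)
    also have "\<dots> = inflow_at h x + (\<Sum>y\<in>nodes h. flub (range (\<lambda>n. edge h y x (flow_approx n y))))"
      unfolding flow_limit_def using mono_flow_approx by (simp add: edge_continuous)
    also have "\<dots> = inflow_at h x + flub (range (\<lambda>n. \<Sum>y\<in>nodes h. edge h y x (flow_approx n y)))"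
      using chains by (simp only: flub_sum[OF flow_monoid finite_nodes])
    also have "\<dots> = flub (range (\<lambda>n. inflow_at h x + (\<Sum>y\<in>nodes h. edge h y x (flow_approx n y))))"
      using mono_sum_chains[OF flow_monoid chains] by (rule add_flub[OF flow_monoid])
    also have "\<dots> = flub (range (\<lambda>n. flow_approx (Suc n) x))"
      using True by (simp add: flow_approx_Suc flow_step_def)
    also have "\<dots> = flow_limit x"
      unfolding flow_limit_def by (rule flub_Suc_shift[OF flow_monoid mono_flow_approx])
    finally show ?thesis .
  next
    case False
    then have "flow_approx n x = 0" for n
      by (cases n) (simp_all add: flow_approx_0 flow_approx_Suc flow_step_def)
    then show ?thesis
      using False by (simp add: flow_step_def flow_limit_def flub_singleton)
  qed
qed

lemma flow_limit_least: "flow_eq h g \<Longrightarrow> flow_limit x \<le> g x"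
proof -
  assume "flow_eq h g"
  then have fix_g: "flow_step g = g" by (simp add: flow_eq_iff_fixpoint)
  have "flow_approx n y \<le> g y" for n y
    by (induction n arbitrary: y)
      (auto simp: flow_approx_0 flow_approx_Suc intro: flow_step_mono[where g' = g, simplified fix_g])
  then show ?thesis
    unfolding flow_limit_def by (intro chain_least[OF flow_monoid] mono_flow_approx)
qed

lemma flow_eq_flow_limit: "flow h = flow_limit"
  unfolding flow_def
proof (rule the_equality)
  show "flow_eq h flow_limit \<and> (\<forall>g. flow_eq h g \<longrightarrow> (\<forall>x\<in>nodes h. flow_limit x \<le> g x))"
    by (simp add: flow_eq_iff_fixpoint flow_limit_fixpoint flow_limit_least)
next
  fix f assume f: "flow_eq h f \<and> (\<forall>g. flow_eq h g \<longrightarrow> (\<forall>x\<in>nodes h. f x \<le> g x))"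
  have limit: "flow_eq h flow_limit" by (simp add: flow_eq_iff_fixpoint flow_limit_fixpoint)
  show "f = flow_limit"
  proof
    fix x
    show "f x = flow_limit x"
    proof (cases "x \<in> nodes h")
      case True
      then show ?thesis using f limit flow_limit_least by (blast intro: antisym)
    next
      case False
      then show ?thesis using f limit unfolding flow_eq_def by simp
    qed
  qed
qed

lemma flow_equation:
  "x \<in> nodes h \<Longrightarrow> flow h x = inflow_at h x + (\<Sum>y\<in>nodes h. edge h y x (flow h y))"
proof -
  assume x: "x \<in> nodes h"
  have "flow h x = flow_step (flow h) x"
    unfolding flow_eq_flow_limit flow_limit_fixpoint ..
  also have "\<dots> = inflow_at h x + (\<Sum>y\<in>nodes h. edge h y x (flow h y))"
    using x by (simp add: flow_step_def)
  finally show ?thesis .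
qed

lemma inflow_le_flow: "x \<in> nodes h \<Longrightarrow> inflow_at h x \<le> flow h x"
  using flow_equation by (metis add_increasing2 zero_le order_refl)

lemma edge_le_flow:
  assumes x: "x \<in> nodes h" and y: "y \<in> nodes h" and a: "a \<le> flow h x"
  shows "edge h x y a \<le> flow h y"
proof -
  have "edge h x y a \<le> edge h x y (flow h x)" using x a by (rule edge_mono)
  also have "\<dots> \<le> (\<Sum>x'\<in>nodes h. edge h x' y (flow h x'))"
    by (subst sum.remove[OF finite_nodes x]) (simp add: add_increasing2)
  also have "\<dots> \<le> flow h y" using flow_equation[OF y] by (simp add: add_increasing)
  finally show ?thesis .
qed

lemma walk_le_outflow:
  "ys \<noteq> [] \<Longrightarrow> set ys \<subseteq> nodes h \<Longrightarrow> z \<notin> nodes h \<Longrightarrow> a \<le> flow h (hd ys) \<Longrightarrow>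
    ecomp (edge h) ys z a \<le> outflow h (last ys) z"
proof (induction ys arbitrary: a rule: list_nonempty_induct)
  case (single x)
  then show ?case by (simp add: outflow_def edge_mono)
next
  case (cons x ys)
  then obtain y rest where "ys = y # rest" by (cases ys) auto
  with cons show ?case by (simp add: edge_le_flow)
qed

end

definition point_inflow :: "nat \<Rightarrow> nat \<Rightarrow> 'a::zero \<Rightarrow> nat \<Rightarrow> nat \<Rightarrow> 'a" where
  "point_inflow w x m = (\<lambda>w' x'. if w' = w \<and> x' = x then m else 0)"

locale idempotent_flow_graph = distributive_flow_graph h
  for h :: "'a::canonically_ordered_monoid_add flow_graph" +
  assumes add_idem: "\<And>m::'a. m + m = m"
begin

lemma inflow_update_idempotent: "idempotent_flow_graph (h\<lparr>inflow := inn\<rparr>)"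
  using inflow_update_distributive add_idem
  by (simp add: idempotent_flow_graph_def idempotent_flow_graph_axioms_def)

text \<open>The values bounded along walks are closed under everything the Kleene iterates are built
  from, so they contain the flow as soon as they contain the inflows.\<close>

definition walk_bounded :: "(nat \<Rightarrow> nat \<Rightarrow> 'a) \<Rightarrow> nat \<Rightarrow> 'a \<Rightarrow> bool" where
  "walk_bounded T y a \<longleftrightarrow> (\<forall>ys z. ys \<noteq> [] \<longrightarrow> set ys \<subseteq> nodes h \<longrightarrow> hd ys = y \<longrightarrow>
      z \<notin> nodes h \<longrightarrow> ecomp (edge h) ys z a \<le> T (last ys) z)"

lemma walk_bounded_0: "walk_bounded T y 0"
  unfolding walk_bounded_def by (auto simp: fm_distributiveD(1)[OF fm_distributive_walk])

lemma walk_bounded_add: "walk_bounded T y a \<Longrightarrow> walk_bounded T y b \<Longrightarrow> walk_bounded T y (a + b)"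
  unfolding walk_bounded_def
  by (auto simp: fm_distributiveD(2)[OF fm_distributive_walk] intro: add_least[OF add_idem])

lemma walk_bounded_sum:
  "(\<And>i. i \<in> S \<Longrightarrow> walk_bounded T y (f i)) \<Longrightarrow> walk_bounded T y (sum f S)"
  by (induction S rule: infinite_finite_induct) (auto intro: walk_bounded_add walk_bounded_0)

lemma walk_bounded_edge:
  assumes "x \<in> nodes h" and "walk_bounded T x a"
  shows "walk_bounded T y (edge h x y a)"
  unfolding walk_bounded_def
proof (intro allI impI)
  fix ys z assume ys: "ys \<noteq> []" "set ys \<subseteq> nodes h" "hd ys = y" "z \<notin> nodes h"
  then obtain rest where ys_def: "ys = y # rest" by (cases ys) auto
  have "ecomp (edge h) (x # ys) z a \<le> T (last (x # ys)) z"
    using assms(2)[unfolded walk_bounded_def, rule_format, of "x # ys" z] assms(1) ys by simp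
  then show "ecomp (edge h) ys z (edge h x y a) \<le> T (last ys) z" by (simp add: ys_def)
qed

lemma walk_bounded_flub:
  assumes mc: "mono (c :: nat \<Rightarrow> 'a)" and bounded: "\<And>n. walk_bounded T y (c n)"
  shows "walk_bounded T y (flub (range c))"
  unfolding walk_bounded_def
proof (intro allI impI)
  fix ys z assume ys: "ys \<noteq> []" "set ys \<subseteq> nodes h" "hd ys = y" "z \<notin> nodes h"
  have "ecomp (edge h) ys z (flub (range c)) = flub (range (\<lambda>i. ecomp (edge h) ys z (c i)))"
    using fm_continuous_walk[OF ys(2)] mc unfolding fm_continuous_def by blast
  also have "\<dots> \<le> T (last ys) z"
    using bounded ys unfolding walk_bounded_def
    by (intro chain_least[OF flow_monoid]
        mono_fm_distributive_comp[OF fm_distributive_walk[OF ys(2)] mc]) auto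
  finally show "ecomp (edge h) ys z (flub (range c)) \<le> T (last ys) z" .
qed

lemma outflow_le_walk_bound:
  assumes inflow_bounded: "\<And>x ys z. ys \<noteq> [] \<Longrightarrow> set ys \<subseteq> nodes h \<Longrightarrow> hd ys = x \<Longrightarrow>
      z \<notin> nodes h \<Longrightarrow> ecomp (edge h) ys z (inflow_at h x) \<le> T (last ys) z"
    and y: "y \<in> nodes h" and z: "z \<notin> nodes h"
  shows "outflow h y z \<le> T y z"
proof -
  have "walk_bounded T x (flow_approx n x)" for n x
  proof (induction n arbitrary: x)
    case 0
    then show ?case by (simp add: flow_approx_0 walk_bounded_0)
  next
    case (Suc n)
    have "walk_bounded T x (inflow_at h x)"
      using inflow_bounded unfolding walk_bounded_def by blast
    then show ?case
      using Suc.IH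
      by (auto simp: flow_approx_Suc flow_step_def
          intro!: walk_bounded_0 walk_bounded_add walk_bounded_sum walk_bounded_edge)
  qed
  then have "walk_bounded T y (flow h y)"
    unfolding flow_eq_flow_limit flow_limit_def by (intro walk_bounded_flub mono_flow_approx)
  then have "ecomp (edge h) [y] z (flow h y) \<le> T y z"
    using y z unfolding walk_bounded_def by (auto dest: spec[of _ "[y]"])
  then show ?thesis using y z by (simp add: outflow_def)
qed

lemma inflow_at_point_inflow:
  assumes "w \<notin> nodes h"
  shows "inflow_at (h\<lparr>inflow := point_inflow w x m\<rparr>) x' = (if x' = x then m else 0)"
  using assms isum_indicator[OF flow_monoid add_idem, of w "- nodes h"]
    isum_indicator[OF flow_monoid add_idem, of w "- nodes h" 0]
  by (cases "x' = x") (simp_all add: inflow_at_def point_inflow_def)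

lemma epath_le_point_outflow:
  assumes w: "w \<notin> nodes h" and p: "p \<in> paths h x y z"
  shows "epath h p m \<le> outflow (h\<lparr>inflow := point_inflow w x m\<rparr>) y z"
proof -
  interpret g: idempotent_flow_graph "h\<lparr>inflow := point_inflow w x m\<rparr>"
    by (rule inflow_update_idempotent)
  obtain xs where xs: "p = (xs, z)" "xs \<noteq> []" "set xs \<subseteq> nodes h" "hd xs = x" "last xs = y"
    and z: "z \<notin> nodes h"
    using p unfolding paths_def by auto
  have "m \<le> flow (h\<lparr>inflow := point_inflow w x m\<rparr>) x"
    using g.inflow_le_flow[of x] inflow_at_point_inflow[OF w, of x m x] xs hd_in_set by auto
  then show ?thesis
    using g.walk_le_outflow[of xs z m] xs z by (simp add: epath_def)
qed

lemma point_outflow_le_epaths: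
  assumes w: "w \<notin> nodes h" and y: "y \<in> nodes h" and z: "z \<notin> nodes h"
  shows "outflow (h\<lparr>inflow := point_inflow w x m\<rparr>) y z \<le> epaths h (paths h x y z) m"
proof -
  let ?g = "h\<lparr>inflow := point_inflow w x m\<rparr>"
  interpret g: idempotent_flow_graph ?g by (rule inflow_update_idempotent)
  show ?thesis
  proof (rule g.outflow_le_walk_bound[where T = "\<lambda>y z. epaths h (paths h x y z) m"])
    fix x' ys z'
    assume walk: "ys \<noteq> []" "set ys \<subseteq> nodes ?g" "hd ys = x'" "z' \<notin> nodes ?g"
    show "ecomp (edge ?g) ys z' (inflow_at ?g x') \<le> epaths h (paths h x (last ys) z') m"
    proof (cases "x' = x")
      case True
      then have "(ys, z') \<in> paths h x (last ys) z'" using walk unfolding paths_def by auto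
      then show ?thesis
        using True inflow_at_point_inflow[OF w]
          isum_upper[OF flow_monoid, of "(ys, z')" _ "\<lambda>q. epath h q m"]
        by (simp add: epaths_def epath_def)
    next
      case False
      then show ?thesis
        using walk inflow_at_point_inflow[OF w] fm_distributiveD(1)[OF fm_distributive_walk]
        by simp
    qed
  qed (use y z in simp_all)
qed

end

lemma path_replacement_inflow_update:
  "path_replacement (h\<^sub>1\<lparr>inflow := i\<^sub>1\<rparr>) (h\<^sub>2\<lparr>inflow := i\<^sub>2\<rparr>) = path_replacement h\<^sub>1 h\<^sub>2"
  by (simp add: path_replacement_def Out_def paths_def epaths_def epath_def)

lemma path_replacement_if_tf_eq:
  assumes h1: "idempotent_flow_graph h\<^sub>1" and h2: "idempotent_flow_graph h\<^sub>2"
    and nodes: "nodes h\<^sub>1 = nodes h\<^sub>2" and tf: "tf h\<^sub>1 = tf h\<^sub>2"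
  shows "path_replacement h\<^sub>1 h\<^sub>2"
  unfolding path_replacement_def
proof (intro ballI allI impI exI conjI)
  fix x y z p m
  assume y: "y \<in> nodes h\<^sub>1" and z: "z \<notin> nodes h\<^sub>1" and p: "p \<in> paths h\<^sub>1 x y z"
  interpret h1: idempotent_flow_graph h\<^sub>1 by (rule h1)
  interpret h2: idempotent_flow_graph h\<^sub>2 by (rule h2)
  obtain w where w: "w \<notin> nodes h\<^sub>1"
    using ex_new_if_finite[OF infinite_UNIV_nat h1.finite_nodes] by blast
  have "epath h\<^sub>1 p m \<le> outflow (h\<^sub>1\<lparr>inflow := point_inflow w x m\<rparr>) y z"
    using w p by (rule h1.epath_le_point_outflow)
  also have "\<dots> = outflow (h\<^sub>2\<lparr>inflow := point_inflow w x m\<rparr>) y z"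
    using tf unfolding tf_def by metis
  also have "\<dots> \<le> epaths h\<^sub>2 (paths h\<^sub>2 x y z) m"
    using w y z nodes by (intro h2.point_outflow_le_epaths) auto
  finally show "epath h\<^sub>1 p m \<le> epaths h\<^sub>2 (paths h\<^sub>2 x y z) m" .
qed simp

lemma walk_le_outflow_of_path_replacement:
  assumes h2: "idempotent_flow_graph h\<^sub>2" and nodes: "nodes h\<^sub>1 = nodes h\<^sub>2"
    and replacement: "path_replacement h\<^sub>1 h\<^sub>2" and z: "z \<notin> nodes h\<^sub>1"
  shows "ys \<noteq> [] \<Longrightarrow> set ys \<subseteq> nodes h\<^sub>1 \<Longrightarrow> a \<le> flow h\<^sub>2 (hd ys) \<Longrightarrow>
    ecomp (edge h\<^sub>1) ys z a \<le> outflow h\<^sub>2 (last ys) z"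
proof (induction ys arbitrary: a)
  case Nil
  then show ?case by simp
next
  case (Cons x ys)
  interpret h2: idempotent_flow_graph h\<^sub>2 by (rule h2)
  have x: "x \<in> nodes h\<^sub>1" using Cons.prems by simp
  show ?case
  proof (cases "x \<in> Out h\<^sub>1 h\<^sub>2")
    case True
    have path: "(x # ys, z) \<in> paths h\<^sub>1 x (last (x # ys)) z"
      using Cons.prems z unfolding paths_def by auto
    have last: "last (x # ys) \<in> nodes h\<^sub>1" using Cons.prems by auto
    obtain P where P: "P \<subseteq> paths h\<^sub>2 x (last (x # ys)) z"
      and replaced: "epath h\<^sub>1 (x # ys, z) a \<le> epaths h\<^sub>2 P a"
      using replacement[unfolded path_replacement_def, rule_format, OF True last z path] by blast
    have "epath h\<^sub>2 q a \<le> outflow h\<^sub>2 (last (x # ys)) z" if "q \<in> P" for q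
    proof -
      obtain qs where "q = (qs, z)" "qs \<noteq> []" "set qs \<subseteq> nodes h\<^sub>2" "hd qs = x"
        "last qs = last (x # ys)"
        using P \<open>q \<in> P\<close> unfolding paths_def by auto
      then show ?thesis
        using h2.walk_le_outflow[of qs z a] Cons.prems z nodes by (simp add: epath_def)
    qed
    then have "epaths h\<^sub>2 P a \<le> outflow h\<^sub>2 (last (x # ys)) z"
      unfolding epaths_def by (rule isum_least[OF h2.flow_monoid h2.add_idem])
    with replaced show ?thesis by (simp add: epath_def)
  next
    case False
    then have same_edges: "edge h\<^sub>1 x = edge h\<^sub>2 x" using x unfolding Out_def by auto
    show ?thesis
    proof (cases ys)
      case Nil
      then show ?thesis
        using h2.walk_le_outflow[of "[x]" z a] same_edges x z nodes Cons.prems by simp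
    next
      case (Cons y rest)
      then have "edge h\<^sub>2 x y a \<le> flow h\<^sub>2 y"
        using Cons.prems nodes by (intro h2.edge_le_flow) auto
      then show ?thesis using Cons.IH Cons.prems same_edges \<open>ys = y # rest\<close> by simp
    qed
  qed
qed

lemma outflow_le_of_path_replacement:
  assumes h1: "idempotent_flow_graph h\<^sub>1" and h2: "idempotent_flow_graph h\<^sub>2"
    and nodes: "nodes h\<^sub>1 = nodes h\<^sub>2" and inflows: "\<And>x. inflow_at h\<^sub>1 x = inflow_at h\<^sub>2 x"
    and replacement: "path_replacement h\<^sub>1 h\<^sub>2"
  shows "outflow h\<^sub>1 y z \<le> outflow h\<^sub>2 y z"
proof (cases "y \<in> nodes h\<^sub>1 \<and> z \<notin> nodes h\<^sub>1")
  case True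
  interpret h1: idempotent_flow_graph h\<^sub>1 by (rule h1)
  interpret h2: idempotent_flow_graph h\<^sub>2 by (rule h2)
  show ?thesis
  proof (rule h1.outflow_le_walk_bound)
    fix x ys z'
    assume walk: "ys \<noteq> []" "set ys \<subseteq> nodes h\<^sub>1" "hd ys = x" "z' \<notin> nodes h\<^sub>1"
    then have "hd ys \<in> nodes h\<^sub>2" using nodes hd_in_set by auto
    then have "inflow_at h\<^sub>1 x \<le> flow h\<^sub>2 (hd ys)"
      using h2.inflow_le_flow inflows walk(3) by simp
    then show "ecomp (edge h\<^sub>1) ys z' (inflow_at h\<^sub>1 x) \<le> outflow h\<^sub>2 (last ys) z'"
      using walk_le_outflow_of_path_replacement[OF h2 nodes replacement] walk by blast
  qed (use True in auto)
next
  case False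
  then show ?thesis by (auto simp: outflow_def)
qed

lemma tf_eq_if_path_replacement:
  assumes h1: "idempotent_flow_graph h\<^sub>1" and h2: "idempotent_flow_graph h\<^sub>2"
    and nodes: "nodes h\<^sub>1 = nodes h\<^sub>2"
    and replacement: "path_replacement h\<^sub>1 h\<^sub>2" "path_replacement h\<^sub>2 h\<^sub>1"
  shows "tf h\<^sub>1 = tf h\<^sub>2"
proof (intro ext)
  fix inn y z
  let ?h1 = "h\<^sub>1\<lparr>inflow := inn\<rparr>" and ?h2 = "h\<^sub>2\<lparr>inflow := inn\<rparr>"
  have h1': "idempotent_flow_graph ?h1" and h2': "idempotent_flow_graph ?h2"
    using idempotent_flow_graph.inflow_update_idempotent h1 h2 by blast+
  have nodes': "nodes ?h1 = nodes ?h2" and inflows: "inflow_at ?h1 x = inflow_at ?h2 x" for x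
    using nodes by (simp_all add: inflow_at_def)
  have "outflow ?h1 y z \<le> outflow ?h2 y z"
    by (rule outflow_le_of_path_replacement[OF h1' h2' nodes' inflows])
      (simp add: path_replacement_inflow_update replacement)
  moreover have "outflow ?h2 y z \<le> outflow ?h1 y z"
    by (rule outflow_le_of_path_replacement[OF h2' h1' nodes'[symmetric] inflows[symmetric]])
      (simp add: path_replacement_inflow_update replacement)
  ultimately show "tf h\<^sub>1 inn y z = tf h\<^sub>2 inn y z" by (simp add: tf_def)
qed

theorem theorem4:
  fixes h1 h2 :: "'a::canonically_ordered_monoid_add flow_graph"
  assumes fm: "flow_monoid TYPE('a)"
    and idem: "\<And>m::'a. m + m = m"
    and fg1: "is_flow_graph h1" and fg2: "is_flow_graph h2"
    and same_nodes: "nodes h1 = nodes h2"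
    and dist1: "\<forall>x\<in>nodes h1. \<forall>z. fm_distributive (edge h1 x z)"
    and dist2: "\<forall>x\<in>nodes h2. \<forall>z. fm_distributive (edge h2 x z)"
  shows "tf h1 = tf h2 \<longleftrightarrow> path_replacement h1 h2 \<and> path_replacement h2 h1"
proof -
  have h1: "idempotent_flow_graph h1" and h2: "idempotent_flow_graph h2"
    using fm idem fg1 fg2 dist1 dist2
    by (simp_all add: idempotent_flow_graph_def idempotent_flow_graph_axioms_def
        distributive_flow_graph_def)
  show ?thesis
    using path_replacement_if_tf_eq[OF h1 h2 same_nodes]
      path_replacement_if_tf_eq[OF h2 h1 same_nodes[symmetric]]
      tf_eq_if_path_replacement[OF h1 h2 same_nodes]
    by (auto simp: eq_commute[of "tf h1"])
qed

end
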